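(* Let $\mathcal D\subset\mathbb R^n$ be nonempty, compact and convex, let $f$ be differentiable and $\mu$-strongly convex with minimizer $\mathbf x^*$ over $\mathcal D$ and $f^*=f(\mathbf x^* )$, and let $c>0$, $0<p\le1$. Let $(\mathbf x_k,\bar{\mathbf s}_k)$ be generated by the averaged Frank–Wolfe method (defined in the context). If $f(\mathbf x_k)-f^*=O(k^{-q})$ for some $q>0$, then there is a constant $C>0$ such that $\|\bar{\mathbf s}_k-\mathbf x_k\|_2^2\le C\max\{k^{-(q/2+p-1)},\,k^{-2p}\}$.
   Context: $\mathrm{LMO}_{\mathcal D}(x)\in\arg\min_{s\in\mathcal D}\nabla f(x)^Ts$. The averaged Frank–Wolfe method: given $\mathbf x_0\in\mathcal D$ and arbitrary $\bar{\mathbf s}_{-1}\in\mathcal D$, for $k=0,1,\dots$ set $\mathbf s_k=\mathrm{LMO}_{\mathcal D}(\mathbf x_k)$, $\bar{\mathbf s}_k=\bar{\mathbf s}_{k-1}+\beta_k(\mathbf s_k-\bar{\mathbf s}_{k-1})$, $\mathbf x_{k+1}=\mathbf x_k+\gamma_k(\bar{\mathbf s}_k-\mathbf x_k)$ with $\gamma_k=\frac{c}{c+k}$, $\beta_k=\left(\frac{c}{c+k}\right)^p$. *)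

theory Defs
  imports "HOL-Analysis.Analysis" "HOL-Library.Landau_Symbols"
begin

definition strongly_convex_on :: "real \<Rightarrow> ('a::real_normed_vector) set \<Rightarrow> ('a \<Rightarrow> real) \<Rightarrow> bool" where
  "strongly_convex_on \<mu> D f \<longleftrightarrow>
     (\<forall>x\<in>D. \<forall>y\<in>D. \<forall>t::real. 0 \<le> t \<and> t \<le> 1 \<longrightarrow>
        f (t *\<^sub>R x + (1 - t) *\<^sub>R y) \<le> t * f x + (1 - t) * f y - \<mu> / 2 * t * (1 - t) * (norm (x - y))\<^sup>2)"

end

theory Submission
  imports Defs
begin

(*
  Write d_k = sbar_k - x_k and X_k = x_k - x*.  Strong convexity turns the assumed rate into
  norm X_k = O(k^(-q/2)), and since both step sizes are O(k^(-p)) and all points lie in the bounded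
  set D, consecutive d_k differ by O(k^(-p)).  Summing x_(j+1) - x_j = gamma_j d_j over a window
  k <= j < k + L expresses (sum of gamma_j) d_k, with (sum of gamma_j) of order L/k, as
  X_(k+L) - X_k = O(k^(-q/2)) up to an error of order (L/k) L k^(-p).  Hence
  norm d_k = O(k^(1-q/2) / L + L k^(-p)), and L of order k^((1+p-q/2)/2) balances the two terms.
*)

lemma strongly_convex_on_minimizer_growth:
  fixes f :: "'a::real_normed_vector \<Rightarrow> real"
  assumes sc: "strongly_convex_on \<mu> D f" and "convex D"
    and xstar: "xstar \<in> D" and min: "\<forall>y\<in>D. f xstar \<le> f y" and y: "y \<in> D"
  shows "\<mu> / 4 * (norm (y - xstar))\<^sup>2 \<le> f y - f xstar"
proof -
  define m where "m = (1/2) *\<^sub>R y + (1 - 1/2) *\<^sub>R xstar"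
  have "m \<in> D"
    unfolding m_def using convexD[OF \<open>convex D\<close> y xstar, of "1/2" "1 - 1/2"] by simp
  then have "f xstar \<le> f m" using min by blast
  also have "f m \<le> 1/2 * f y + (1 - 1/2) * f xstar - \<mu> / 2 * (1/2) * (1 - 1/2) * (norm (y - xstar))\<^sup>2"
    unfolding m_def by (rule sc[unfolded strongly_convex_on_def, rule_format]) (use y xstar in auto)
  finally show ?thesis by simp
qed

lemma bigo_powr_imp_uniform_bound:
  fixes h :: "nat \<Rightarrow> real"
  assumes "h \<in> O(\<lambda>k. real k powr (-a))"
  shows "\<exists>C. \<forall>k\<ge>1. \<bar>h k\<bar> \<le> C * real k powr (-a)"
proof -
  obtain C0 where "eventually (\<lambda>k. norm (h k) \<le> C0 * norm (real k powr (-a))) at_top"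
    using landau_o.bigE[OF assms] by blast
  then obtain N where "\<forall>k\<ge>N. \<bar>h k\<bar> \<le> C0 * real k powr (-a)"
    by (auto simp: eventually_at_top_linorder)
  define C where "C = max C0 (\<Sum>j<N. \<bar>h j\<bar> * real j powr a)"
  have "\<bar>h k\<bar> \<le> C * real k powr (-a)" if "k \<ge> 1" for k
  proof (cases "k \<ge> N")
    case True
    then show ?thesis using \<open>\<forall>k\<ge>N. _\<close> unfolding C_def
      by (meson max.cobounded1 mult_right_mono order.trans powr_ge_zero)
  next
    case False
    have "\<bar>h k\<bar> = (\<bar>h k\<bar> * real k powr a) * real k powr (-a)"
      using that by (simp add: powr_minus field_simps)
    also have "\<dots> \<le> (\<Sum>j<N. \<bar>h j\<bar> * real j powr a) * real k powr (-a)"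
      using False by (intro mult_right_mono member_le_sum) auto
    also have "\<dots> \<le> C * real k powr (-a)"
      unfolding C_def by (intro mult_right_mono) auto
    finally show ?thesis .
  qed
  then show ?thesis by blast
qed

lemma strongly_convex_on_minimizer_dist_rate:
  fixes f :: "'a::real_normed_vector \<Rightarrow> real" and y :: "nat \<Rightarrow> 'a"
  assumes sc: "strongly_convex_on \<mu> D f" and "\<mu> > 0" and "convex D"
    and xstar: "xstar \<in> D" and min: "\<forall>z\<in>D. f xstar \<le> f z" and y: "\<forall>k. y k \<in> D"
    and rate: "(\<lambda>k. f (y k) - f xstar) \<in> O(\<lambda>k. real k powr (-q))"
  shows "\<exists>E. \<forall>k\<ge>1. norm (y k - xstar) \<le> E * real k powr (- (q / 2))"
proof -
  obtain C where C: "\<forall>k\<ge>1. \<bar>f (y k) - f xstar\<bar> \<le> C * real k powr (-q)"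
    using bigo_powr_imp_uniform_bound[OF rate] by blast
  have "C \<ge> 0" using C[rule_format, of 1] by simp
  define E where "E = sqrt (4 * C / \<mu>)"
  have "norm (y k - xstar) \<le> E * real k powr (- (q / 2))" if "1 \<le> k" for k
  proof (rule power2_le_imp_le)
    have "(norm (y k - xstar))\<^sup>2 \<le> 4 / \<mu> * (f (y k) - f xstar)"
      using strongly_convex_on_minimizer_growth[OF sc \<open>convex D\<close> xstar min y[rule_format, of k]] \<open>\<mu> > 0\<close>
      by (simp add: field_simps)
    also have "\<dots> \<le> 4 / \<mu> * (C * real k powr (-q))"
      using C that \<open>\<mu> > 0\<close> by (intro mult_left_mono) auto
    also have "\<dots> = (E * real k powr (- (q / 2)))\<^sup>2"
      using \<open>C \<ge> 0\<close> \<open>\<mu> > 0\<close> that by (simp add: E_def power_mult_distrib powr_power)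
    finally show "(norm (y k - xstar))\<^sup>2 \<le> (E * real k powr (- (q / 2)))\<^sup>2" .
    show "0 \<le> E * real k powr (- (q / 2))" unfolding E_def using \<open>C \<ge> 0\<close> \<open>\<mu> > 0\<close> by simp
  qed
  then show ?thesis by blast
qed

lemma convex_iteration_in:
  assumes "convex D" and "y 0 \<in> D" and "\<And>k. z k \<in> D" and "\<And>k. 0 \<le> t k \<and> t k \<le> 1"
    and "\<And>k. y (Suc k) = y k + t k *\<^sub>R (z k - y k)"
  shows "y k \<in> D"
proof (induction k)
  case 0
  show ?case by fact
next
  case (Suc k)
  have "y (Suc k) = (1 - t k) *\<^sub>R y k + t k *\<^sub>R z k"
    using assms(5) by (simp add: algebra_simps)
  then show ?case
    using convexD_alt[OF \<open>convex D\<close> Suc assms(3)] assms(4) by simp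
qed

lemma norm_diff_le_increments:
  fixes d :: "nat \<Rightarrow> 'a::real_normed_vector"
  assumes "\<forall>j\<ge>k. norm (d (Suc j) - d j) \<le> b"
  shows "norm (d (k + i) - d k) \<le> real i * b"
proof (induction i)
  case 0
  show ?case by simp
next
  case (Suc i)
  have "norm (d (k + Suc i) - d k) \<le> norm (d (Suc (k + i)) - d (k + i)) + norm (d (k + i) - d k)"
    using norm_triangle_ineq[of "d (Suc (k + i)) - d (k + i)" "d (k + i) - d k"] by simp
  also have "\<dots> \<le> b + real i * b"
    using assms Suc by (intro add_mono) auto
  finally show ?case by (simp add: algebra_simps)
qed

lemma weighted_window_bound:
  fixes X d :: "nat \<Rightarrow> 'a::real_normed_vector"
  assumes XS: "\<forall>j. X (Suc j) = X j + g j *\<^sub>R d j" and g: "\<forall>j. 0 \<le> g j"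
    and incr: "\<forall>j\<ge>k. norm (d (Suc j) - d j) \<le> b"
  shows "(\<Sum>j<L. g (k + j)) * norm (d k) \<le> norm (X (k + L) - X k) + (\<Sum>j<L. g (k + j)) * (real L * b)"
proof -
  define G where "G = (\<Sum>j<L. g (k + j))"
  define err where "err = (\<Sum>j<L. g (k + j) *\<^sub>R (d (k + j) - d k))"
  have "X (k + i) - X k = (\<Sum>j<i. g (k + j) *\<^sub>R d (k + j))" for i
    by (induction i) (use XS in \<open>simp_all add: algebra_simps\<close>)
  then have window: "G *\<^sub>R d k = (X (k + L) - X k) - err"
    unfolding G_def err_def by (simp add: scaleR_sum_left scaleR_diff_right sum_subtractf)
  have "b \<ge> 0" using incr norm_ge_zero order.trans by blast
  have "norm err \<le> (\<Sum>j<L. g (k + j) * (real L * b))"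
    unfolding err_def
  proof (rule order.trans[OF norm_sum sum_mono])
    fix j assume "j \<in> {..<L}"
    then have "norm (d (k + j) - d k) \<le> real L * b"
    proof -
      have "real j * b \<le> real L * b"
        using \<open>j \<in> {..<L}\<close> \<open>b \<ge> 0\<close> by (intro mult_right_mono) auto
      then show ?thesis using norm_diff_le_increments[OF incr, of j] by linarith
    qed
    then show "norm (g (k + j) *\<^sub>R (d (k + j) - d k)) \<le> g (k + j) * (real L * b)"
      using g by (simp add: mult_left_mono)
  qed
  then have "norm err \<le> G * (real L * b)"
    unfolding G_def by (simp add: sum_distrib_right)
  moreover have "G * norm (d k) = norm (G *\<^sub>R d k)"
    using g by (simp add: G_def sum_nonneg)
  moreover have "norm (G *\<^sub>R d k) \<le> norm (X (k + L) - X k) + norm err"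
    unfolding window by (rule norm_triangle_ineq4)
  ultimately have "G * norm (d k) \<le> norm (X (k + L) - X k) + G * (real L * b)"
    by linarith
  then show ?thesis unfolding G_def .
qed

lemma step_size_window_sum_ge:
  assumes "c > 0" and "1 \<le> k" and "L \<le> k"
  shows "real L * c / ((c + 2) * real k) \<le> (\<Sum>j<L. c / (c + real (k + j)))"
proof -
  have "c / ((c + 2) * real k) \<le> c / (c + real (k + j))" if "j < L" for j
  proof -
    have "c \<le> c * real k" using assms by simp
    moreover have "real j \<le> real k" using that assms by simp
    ultimately have "c + real (k + j) \<le> (c + 2) * real k" by (simp add: algebra_simps)
    then show ?thesis using assms by (intro divide_left_mono) auto
  qed
  then have "(\<Sum>j<L. c / ((c + 2) * real k)) \<le> (\<Sum>j<L. c / (c + real (k + j)))"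
    by (intro sum_mono) auto
  then show ?thesis by simp
qed

lemma step_size_powr_le:
  assumes "c > 0" and "p \<ge> 0" and "1 \<le> k" and "k \<le> j"
  shows "(c / (c + real j)) powr p \<le> c powr p * real k powr (-p)"
proof -
  have "c / (c + real j) \<le> c / real k"
    using assms by (intro divide_left_mono) auto
  then have "(c / (c + real j)) powr p \<le> (c / real k) powr p"
    using assms by (intro powr_mono2) auto
  also have "\<dots> = c powr p * real k powr (-p)"
    using assms by (simp add: powr_divide powr_minus_divide)
  finally show ?thesis .
qed

lemma averaged_direction_increment_le:
  fixes x s sbar :: "nat \<Rightarrow> 'a::real_normed_vector"
  assumes "c > 0" and "0 < p" and "p \<le> 1"
    and sbarS: "\<forall>k. sbar (Suc k) = sbar k + (c / (c + real (Suc k))) powr p *\<^sub>R (s (Suc k) - sbar k)"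
    and xS: "\<forall>k. x (Suc k) = x k + (c / (c + real k)) *\<^sub>R (sbar k - x k)"
    and s_R: "norm (s (Suc j) - sbar j) \<le> R" and x_R: "norm (sbar j - x j) \<le> R"
    and "1 \<le> k" and "k \<le> j"
  shows "norm ((sbar (Suc j) - x (Suc j)) - (sbar j - x j)) \<le> R * (c powr p + c) * real k powr (-p)"
proof -
  define \<beta> where "\<beta> = (c / (c + real (Suc j))) powr p"
  define \<gamma> where "\<gamma> = c / (c + real j)"
  have \<beta>_le: "\<beta> \<le> c powr p * real k powr (-p)"
    unfolding \<beta>_def using assms by (intro step_size_powr_le) auto
  have "\<gamma> \<le> c * real k powr (-1)"
    using step_size_powr_le[of c 1 k j] assms by (simp add: \<gamma>_def)
  also have "\<dots> \<le> c * real k powr (-p)"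
    using assms by (intro mult_left_mono powr_mono) auto
  finally have \<gamma>_le: "\<gamma> \<le> c * real k powr (-p)" .
  have "0 \<le> \<beta>" unfolding \<beta>_def by simp
  have "0 \<le> \<gamma>" unfolding \<gamma>_def using assms by simp
  have "0 \<le> R" using order.trans[OF norm_ge_zero x_R] .
  have "(sbar (Suc j) - x (Suc j)) - (sbar j - x j) = \<beta> *\<^sub>R (s (Suc j) - sbar j) - \<gamma> *\<^sub>R (sbar j - x j)"
    unfolding sbarS[rule_format, of j] xS[rule_format, of j] \<beta>_def \<gamma>_def by (simp add: algebra_simps)
  then have "norm ((sbar (Suc j) - x (Suc j)) - (sbar j - x j))
      \<le> norm (\<beta> *\<^sub>R (s (Suc j) - sbar j)) + norm (\<gamma> *\<^sub>R (sbar j - x j))"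
    by (simp only: norm_triangle_ineq4)
  also have "\<dots> = \<beta> * norm (s (Suc j) - sbar j) + \<gamma> * norm (sbar j - x j)"
    using \<open>0 \<le> \<beta>\<close> \<open>0 \<le> \<gamma>\<close> by simp
  also have "\<dots> \<le> (c powr p * real k powr (-p)) * R + (c * real k powr (-p)) * R"
    using \<beta>_le \<gamma>_le \<open>0 \<le> \<beta>\<close> \<open>0 \<le> \<gamma>\<close> \<open>0 \<le> R\<close> s_R x_R
    by (intro add_mono mult_mono) auto
  finally show ?thesis by (simp add: algebra_simps)
qed

lemma averaged_direction_window_bound:
  fixes X d :: "nat \<Rightarrow> 'a::real_normed_vector"
  assumes "c > 0" and "a \<ge> 0"
    and XS: "\<forall>j. X (Suc j) = X j + (c / (c + real j)) *\<^sub>R d j"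
    and XE: "\<forall>j\<ge>1. norm (X j) \<le> E * real j powr (-a)"
    and incr: "\<forall>j\<ge>k. norm (d (Suc j) - d j) \<le> b"
    and "1 \<le> L" and "L \<le> k"
  shows "norm (d k) \<le> (2 * E * (c + 2) / c) * real k powr (1 - a) / real L + real L * b"
proof -
  define G where "G = (\<Sum>j<L. c / (c + real (k + j)))"
  define G0 where "G0 = real L * c / ((c + 2) * real k)"
  have "G0 \<le> G"
    unfolding G_def G0_def using assms by (intro step_size_window_sum_ge) auto
  moreover have "G0 > 0" unfolding G0_def using assms by simp
  ultimately have "G > 0" by linarith
  have "E \<ge> 0"
    using XE[rule_format, of 1] order.trans[OF norm_ge_zero] by simp
  have X_le: "norm (X j) \<le> E * real k powr (-a)" if "k \<le> j" for j
  proof -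
    have "real j powr (-a) \<le> real k powr (-a)"
      using that assms by (intro powr_mono2') auto
    then have "E * real j powr (-a) \<le> E * real k powr (-a)"
      using \<open>E \<ge> 0\<close> by (rule mult_left_mono)
    then show ?thesis
      using XE[rule_format, of j] that assms by linarith
  qed
  have "norm (X (k + L) - X k) \<le> norm (X (k + L)) + norm (X k)"
    by (rule norm_triangle_ineq4)
  also have "\<dots> \<le> 2 * E * real k powr (-a)"
    using X_le[of "k + L"] X_le[of k] by simp
  finally have X_window: "norm (X (k + L) - X k) \<le> 2 * E * real k powr (-a)" .
  have "\<forall>j. 0 \<le> c / (c + real j)" using assms by simp
  from weighted_window_bound[OF XS this incr, of L]
  have "G * norm (d k) \<le> norm (X (k + L) - X k) + G * (real L * b)"
    unfolding G_def by simp
  with X_window have "G * norm (d k) \<le> 2 * E * real k powr (-a) + G * (real L * b)"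
    by linarith
  then have "norm (d k) \<le> (2 * E * real k powr (-a) + G * (real L * b)) / G"
    using \<open>G > 0\<close> by (simp add: pos_le_divide_eq mult.commute)
  also have "\<dots> = 2 * E * real k powr (-a) / G + real L * b"
    using \<open>G > 0\<close> by (simp add: add_divide_distrib)
  also have "2 * E * real k powr (-a) / G \<le> 2 * E * real k powr (-a) / G0"
    using \<open>G0 \<le> G\<close> \<open>G0 > 0\<close> \<open>E \<ge> 0\<close> by (intro divide_left_mono) auto
  also have "\<dots> = (2 * E * (c + 2) / c) * (real k powr (-a) * real k) / real L"
    unfolding G0_def using assms by (simp add: field_simps)
  also have "real k powr (-a) * real k = real k powr (1 - a)"
    using assms by (simp add: powr_diff powr_minus_divide)
  finally show ?thesis by simp
qed

lemma balanced_window_length: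
  fixes A B \<alpha> \<beta> :: real and k :: nat
  assumes "A \<ge> 0" and "B \<ge> 0" and "\<alpha> + \<beta> \<le> 2" and "1 \<le> k"
  shows "\<exists>L. 1 \<le> L \<and> L \<le> k \<and>
    A * real k powr \<alpha> / real L + real L * (B * real k powr (-\<beta>))
      \<le> (A + 2 * B) * max (real k powr ((\<alpha> - \<beta>) / 2)) (real k powr (-\<beta>))"
proof (cases "\<alpha> + \<beta> \<ge> 0")
  case True
  \<comment> \<open>a window of length about \<open>k powr ((\<alpha> + \<beta>) / 2)\<close> makes both terms of the same order\<close>
  define t where "t = real k powr ((\<alpha> + \<beta>) / 2)"
  define L where "L = nat \<lceil>t\<rceil>"
  have "1 \<le> t" unfolding t_def using True assms by (simp add: ge_one_powr_ge_zero)
  have "t \<le> real k powr 1"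
    unfolding t_def using assms by (intro powr_mono) auto
  then have "L \<le> k" unfolding L_def using assms by (simp add: nat_le_iff ceiling_le)
  have "t \<le> real L" and "real L \<le> 2 * t" unfolding L_def using \<open>1 \<le> t\<close> by linarith+
  have "\<alpha> - (\<alpha> + \<beta>) / 2 = (\<alpha> - \<beta>) / 2" by (simp add: field_simps)
  then have ratio: "real k powr \<alpha> / t = real k powr ((\<alpha> - \<beta>) / 2)"
    unfolding t_def by (metis powr_diff)
  have "A * real k powr \<alpha> / real L \<le> A * real k powr \<alpha> / t"
    using \<open>1 \<le> t\<close> \<open>t \<le> real L\<close> assms by (intro divide_left_mono) auto
  also have "\<dots> = A * real k powr ((\<alpha> - \<beta>) / 2)"
    using ratio by (metis times_divide_eq_right)
  finally have first: "A * real k powr \<alpha> / real L \<le> A * real k powr ((\<alpha> - \<beta>) / 2)" .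
  have "real L * (B * real k powr (-\<beta>)) \<le> 2 * t * (B * real k powr (-\<beta>))"
    using \<open>real L \<le> 2 * t\<close> assms by (intro mult_right_mono) auto
  also have "\<dots> = 2 * B * real k powr ((\<alpha> - \<beta>) / 2)"
    unfolding t_def by (simp add: powr_add[symmetric] field_simps)
  finally have "A * real k powr \<alpha> / real L + real L * (B * real k powr (-\<beta>))
      \<le> (A + 2 * B) * real k powr ((\<alpha> - \<beta>) / 2)"
    using first by (simp add: algebra_simps)
  also have "\<dots> \<le> (A + 2 * B) * max (real k powr ((\<alpha> - \<beta>) / 2)) (real k powr (-\<beta>))"
    using assms by (intro mult_left_mono) auto
  finally show ?thesis using \<open>1 \<le> t\<close> \<open>t \<le> real L\<close> \<open>L \<le> k\<close> by (intro exI[of _ L]) auto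
next
  case False
  have "real k powr \<alpha> \<le> real k powr (-\<beta>)"
    using False assms by (intro powr_mono) auto
  then have "A * real k powr \<alpha> \<le> A * real k powr (-\<beta>)"
    using assms by (intro mult_left_mono)
  moreover have "0 \<le> B * real k powr (-\<beta>)" using assms by simp
  ultimately have "A * real k powr \<alpha> + B * real k powr (-\<beta>) \<le> (A + 2 * B) * real k powr (-\<beta>)"
    by (simp add: distrib_right)
  also have "\<dots> \<le> (A + 2 * B) * max (real k powr ((\<alpha> - \<beta>) / 2)) (real k powr (-\<beta>))"
    using assms by (intro mult_left_mono) auto
  finally show ?thesis using assms by (intro exI[of _ 1]) auto
qed

lemma power2_max_powr:
  fixes x a b :: real
  assumes "x > 0"
  shows "(max (x powr a) (x powr b))\<^sup>2 = max (x powr (2 * a)) (x powr (2 * b))"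
proof -
  have sq: "(x powr e)\<^sup>2 = x powr (2 * e)" for e
    using assms by (simp add: powr_power)
  show ?thesis
  proof (cases "x powr a \<le> x powr b")
    case True
    then have "(x powr a)\<^sup>2 \<le> (x powr b)\<^sup>2" by (simp add: power_mono)
    then show ?thesis using True by (simp add: max_def sq)
  next
    case False
    then have "(x powr b)\<^sup>2 \<le> (x powr a)\<^sup>2" by (simp add: power_mono)
    then show ?thesis using False by (simp add: max_def sq)
  qed
qed

lemma power2_le_max_powr:
  fixes v :: "nat \<Rightarrow> 'a::real_normed_vector"
  assumes "\<forall>k\<ge>1. norm (v k) \<le> K * max (real k powr (a / 2)) (real k powr (b / 2))"
  shows "\<exists>C>0. \<forall>k\<ge>1. (norm (v k))\<^sup>2 \<le> C * max (real k powr a) (real k powr b)"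
proof (intro exI[of _ "K\<^sup>2 + 1"] conjI allI impI)
  fix k :: nat assume "1 \<le> k"
  have "(norm (v k))\<^sup>2 \<le> (K * max (real k powr (a / 2)) (real k powr (b / 2)))\<^sup>2"
    using assms \<open>1 \<le> k\<close> by (intro power_mono) auto
  also have "\<dots> = K\<^sup>2 * max (real k powr a) (real k powr b)"
    using power2_max_powr[of "real k" "a / 2" "b / 2"] \<open>1 \<le> k\<close> by (simp add: power_mult_distrib)
  also have "\<dots> \<le> (K\<^sup>2 + 1) * max (real k powr a) (real k powr b)"
    by (intro mult_right_mono) (auto simp: le_max_iff_disj)
  finally show "(norm (v k))\<^sup>2 \<le> (K\<^sup>2 + 1) * max (real k powr a) (real k powr b)" .
qed (simp add: add_nonneg_pos)

lemma averaged_direction_bound: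
  fixes x s sbar :: "nat \<Rightarrow> 'a::real_normed_vector"
  assumes "c > 0" and "0 < p" and "p \<le> 1" and "q \<ge> 0"
    and sbarS: "\<forall>k. sbar (Suc k) = sbar k + (c / (c + real (Suc k))) powr p *\<^sub>R (s (Suc k) - sbar k)"
    and xS: "\<forall>k. x (Suc k) = x k + (c / (c + real k)) *\<^sub>R (sbar k - x k)"
    and s_R: "\<forall>j. norm (s (Suc j) - sbar j) \<le> R" and x_R: "\<forall>j. norm (sbar j - x j) \<le> R"
    and XE: "\<forall>k\<ge>1. norm (x k - xstar) \<le> E * real k powr (- (q / 2))"
  shows "\<exists>K. \<forall>k\<ge>1. norm (sbar k - x k) \<le> K * max (real k powr ((1 - q / 2 - p) / 2)) (real k powr (-p))"
proof -
  define A where "A = 2 * E * (c + 2) / c"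
  define B where "B = R * (c powr p + c)"
  have "E \<ge> 0" using XE[rule_format, of 1] order.trans[OF norm_ge_zero] by simp
  then have "A \<ge> 0" unfolding A_def using \<open>c > 0\<close> by simp
  have "R \<ge> 0" using x_R order.trans[OF norm_ge_zero] by blast
  then have "B \<ge> 0" unfolding B_def using \<open>c > 0\<close> by simp
  have X_step: "\<forall>j. x (Suc j) - xstar = (x j - xstar) + (c / (c + real j)) *\<^sub>R (sbar j - x j)"
    using xS by simp
  have "norm (sbar k - x k) \<le> (A + 2 * B) * max (real k powr ((1 - q / 2 - p) / 2)) (real k powr (-p))"
    if k: "1 \<le> k" for k
  proof -
    obtain L where L: "1 \<le> L" "L \<le> k" and balanced:
      "A * real k powr (1 - q / 2) / real L + real L * (B * real k powr (-p))
         \<le> (A + 2 * B) * max (real k powr ((1 - q / 2 - p) / 2)) (real k powr (-p))"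
      using balanced_window_length[OF \<open>A \<ge> 0\<close> \<open>B \<ge> 0\<close> _ k, of "1 - q / 2" p] assms by auto
    have "\<forall>j\<ge>k. norm ((sbar (Suc j) - x (Suc j)) - (sbar j - x j)) \<le> B * real k powr (-p)"
      using averaged_direction_increment_le[OF \<open>c > 0\<close> \<open>0 < p\<close> \<open>p \<le> 1\<close> sbarS xS] s_R x_R k
      unfolding B_def by auto
    then have "norm (sbar k - x k) \<le> A * real k powr (1 - q / 2) / real L + real L * (B * real k powr (-p))"
      using averaged_direction_window_bound[OF \<open>c > 0\<close> _ X_step XE _ L] \<open>q \<ge> 0\<close>
      unfolding A_def by simp
    with balanced show ?thesis by linarith
  qed
  then show ?thesis by blast
qed

theorem corollary3:
  fixes D :: "(real ^ 'n) set"
    and f :: "real ^ 'n \<Rightarrow> real"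
    and grad :: "real ^ 'n \<Rightarrow> real ^ 'n"
    and \<mu> c p q :: real
    and xstar sbm1 :: "real ^ 'n"
    and x s sbar :: "nat \<Rightarrow> real ^ 'n"
  assumes D_ne: "D \<noteq> {}" and D_compact: "compact D" and D_convex: "convex D"
    and f_diff: "\<forall>z\<in>D. (f has_derivative (\<lambda>h. grad z \<bullet> h)) (at z)"
    and mu_pos: "\<mu> > 0" and f_sc: "strongly_convex_on \<mu> D f"
    and xstar_in: "xstar \<in> D" and xstar_min: "\<forall>y\<in>D. f xstar \<le> f y"
    and c_pos: "c > 0" and p_pos: "0 < p" and p_le: "p \<le> 1"
    and x0: "x 0 \<in> D" and sbm1: "sbm1 \<in> D"
    and lmo: "\<forall>k. s k \<in> D \<and> (\<forall>t\<in>D. grad (x k) \<bullet> s k \<le> grad (x k) \<bullet> t)"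
    and sbar0: "sbar 0 = sbm1 + (c / (c + 0)) powr p *\<^sub>R (s 0 - sbm1)"
    and sbarS: "\<forall>k. sbar (Suc k) = sbar k + (c / (c + real (Suc k))) powr p *\<^sub>R (s (Suc k) - sbar k)"
    and xS: "\<forall>k. x (Suc k) = x k + (c / (c + real k)) *\<^sub>R (sbar k - x k)"
    and q_pos: "q > 0"
    and rate: "(\<lambda>k. f (x k) - f xstar) \<in> O(\<lambda>k. real k powr (- q))"
  shows "\<exists>C>0. \<forall>k\<ge>1. (norm (sbar k - x k))\<^sup>2
           \<le> C * max (real k powr (- (q / 2 + p - 1))) (real k powr (- 2 * p))"
proof -
  have "bounded D" using D_compact by (rule compact_imp_bounded)
  have diam: "norm (u - v) \<le> diameter D" if "u \<in> D" "v \<in> D" for u v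
    using diameter_bounded_bound[OF \<open>bounded D\<close> that] by (simp add: dist_norm)
  have sbar_in: "sbar k \<in> D" for k
    by (rule convex_iteration_in[of D sbar "\<lambda>k. s (Suc k)" "\<lambda>k. (c / (c + real (Suc k))) powr p"])
      (use D_convex sbar0 lmo sbarS c_pos p_pos in \<open>auto intro: powr_le1\<close>)
  have x_in: "x k \<in> D" for k
    by (rule convex_iteration_in[of D x sbar "\<lambda>k. c / (c + real k)"])
      (use D_convex x0 sbar_in xS c_pos in auto)
  obtain E where "\<forall>k\<ge>1. norm (x k - xstar) \<le> E * real k powr (- (q / 2))"
    using strongly_convex_on_minimizer_dist_rate[OF f_sc mu_pos D_convex xstar_in xstar_min _ rate]
      x_in by blast
  then obtain K where K:
    "\<forall>k\<ge>1. norm (sbar k - x k) \<le> K * max (real k powr ((1 - q / 2 - p) / 2)) (real k powr (-p))"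
    using averaged_direction_bound[OF c_pos p_pos p_le _ sbarS xS] q_pos diam lmo sbar_in x_in
    by (meson less_imp_le)
  have exponents: "- (q / 2 + p - 1) / 2 = (1 - q / 2 - p) / 2" "- 2 * p / 2 = - p"
    by simp_all
  have "\<forall>k\<ge>1. norm (sbar k - x k)
      \<le> K * max (real k powr (- (q / 2 + p - 1) / 2)) (real k powr (- 2 * p / 2))"
    unfolding exponents by (rule K)
  then show ?thesis by (rule power2_le_max_powr)
qed

end
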